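(* For every positive integer $n$, $\mathrm{Sort}_n(\mathrm{SC}_{\underline{32}1})=\mathrm{Av}_n(\underline{123},132)$; that is, $\tau\in\mathfrak S_n$ satisfies $s(\mathrm{SC}_{\underline{32}1}(\tau))=12\cdots n$ if and only if $\tau$ has no three consecutive entries $\tau_j<\tau_{j+1}<\tau_{j+2}$ and $\tau$ avoids the classical pattern $132$.
   Context: $\mathfrak S_n$ is the set of permutations of $\{1,\dots,n\}$. A vincular pattern is a permutation with some entries underlined; a sequence contains it if it has a subsequence with the same relative order in which entries corresponding to adjacent underlined entries occupy consecutive positions. E.g. an occurrence of $\underline{32}1$ is $a_j a_{j+1} a_l$ with $l>j+1$ and $a_l<a_{j+1}<a_j$. $\mathrm{Av}_n(\dots)$ is the set of permutations of $\mathfrak S_n$ avoiding all listed patterns. For a pattern $\sigma$, the map $\mathrm{SC}_\sigma$ acts on $\tau$: read entries left to right; when the next entry $x$ is read, if pushing $x$ yields a stack whose entries read top to bottom (stack adjacency = consecutive positions) avoid $\sigma$, push $x$; otherwise pop the top stack entry to the output and repeat. At the end pop all remaining entries to the output; the output is $\mathrm{SC}_\sigma(\tau)$. West's stack-sorting map is $s=\mathrm{SC}_{21}$. $\mathrm{Sort}_n(\mathrm{SC}_\sigma)=\{\tau\in\mathfrak S_n : s(\mathrm{SC}_\sigma(\tau))=12\cdots n\}$. *)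

theory Defs
  imports "HOL-Combinatorics.Multiset_Permutations"
begin

text \<open>A vincular pattern is a pair (p, U): p is a permutation (list), and i \<in> U means
  that pattern entries i and i+1 (0-based) are underlined together, i.e. the corresponding
  entries of an occurrence must sit at consecutive positions.\<close>

type_synonym vpattern = "nat list \<times> nat set"

definition contains :: "nat list \<Rightarrow> vpattern \<Rightarrow> bool" where
  "contains w \<sigma> \<longleftrightarrow> (let p = fst \<sigma>; U = snd \<sigma>; k = length p in
     (\<exists>idx :: nat list. length idx = k \<and> sorted_wrt (<) idx \<and>
        (\<forall>i \<in> set idx. i < length w) \<and>
        (\<forall>i<k. \<forall>j<k. (w ! (idx ! i) < w ! (idx ! j)) \<longleftrightarrow> (p ! i < p ! j)) \<and>
        (\<forall>i \<in> U. Suc i < k \<longrightarrow> idx ! Suc i = Suc (idx ! i))))"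

definition avoids :: "nat list \<Rightarrow> vpattern \<Rightarrow> bool" where
  "avoids w \<sigma> \<longleftrightarrow> \<not> contains w \<sigma>"

text \<open>Stack machine. Arguments: pattern, remaining input, stack (head = top), output so far.
  If the stack is empty and pushing is forbidden (impossible for patterns of length \<ge> 2),
  we push anyway.\<close>

function sc_aux :: "vpattern \<Rightarrow> nat list \<Rightarrow> nat list \<Rightarrow> nat list \<Rightarrow> nat list" where
  "sc_aux \<sigma> [] st out = out @ st"
| "sc_aux \<sigma> (x # xs) st out =
     (if avoids (x # st) \<sigma> then sc_aux \<sigma> xs (x # st) out
      else (case st of [] \<Rightarrow> sc_aux \<sigma> xs [x] out
                     | y # ys \<Rightarrow> sc_aux \<sigma> (x # xs) ys (out @ [y])))"
  by pat_completeness auto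
termination
  by (relation "measure (\<lambda>(\<sigma>, xs, st, out). 2 * length xs + length st)") auto

definition SC :: "vpattern \<Rightarrow> nat list \<Rightarrow> nat list" where
  "SC \<sigma> \<tau> = sc_aux \<sigma> \<tau> [] []"

definition pat_21 :: vpattern where "pat_21 = ([2,1], {})"
definition pat_u32_1 :: vpattern where "pat_u32_1 = ([3,2,1], {0})"
definition pat_u123 :: vpattern where "pat_u123 = ([1,2,3], {0,1})"
definition pat_132 :: vpattern where "pat_132 = ([1,3,2], {})"

definition west_s :: "nat list \<Rightarrow> nat list" where
  "west_s = SC pat_21"

definition Sort_n :: "nat \<Rightarrow> vpattern \<Rightarrow> nat list set" where
  "Sort_n n \<sigma> = {\<tau> \<in> permutations_of_set {1..n}. west_s (SC \<sigma> \<tau>) = [1..<Suc n]}"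

definition Av_n :: "nat \<Rightarrow> vpattern list \<Rightarrow> nat list set" where
  "Av_n n ps = {\<tau> \<in> permutations_of_set {1..n}. \<forall>\<sigma> \<in> set ps. avoids \<tau> \<sigma>}"

end

theory Submission
  imports Defs "HOL-Library.Sublist"
begin

(* An entry x cannot be pushed by SC_{32-1} onto a stack y # ys exactly when y < x and some
   entry of ys is smaller than y; in the input this is an occurrence of 1-23 (an entry c
   followed later by adjacent entries y < x with c < y) ending at x. So if tau avoids 1-23,
   nothing is popped before the end and SC(tau) = rev tau, which is West-sortable iff it
   avoids 231 (Knuth), i.e. iff tau avoids 132; avoiding 1-23 already forces avoiding the
   underlined 123. If tau contains 1-23, then at its first occurrence the top y is popped
   in favour of x, while the minimum m < y of the rest of the stack can only leave after x:
   y, x, m is a 231 in the output. Finally, in a permutation an occurrence of 1-23 gives one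
   of underlined 123 or of 132, according to whether the entry just before y is smaller or
   larger than y. *)

lemma subseq_Cons_Cons_iff:
  "subseq (x # xs) (y # ys) \<longleftrightarrow> x = y \<and> subseq xs ys \<or> subseq (x # xs) ys"
  by (cases "x = y") (auto dest: subseq_Cons')

lemma subseq_pair_iff_nth:
  "subseq [a, b] w \<longleftrightarrow> (\<exists>j<length w. \<exists>i<j. w ! i = a \<and> w ! j = b)"
proof (induction w)
  case (Cons y w)
  have "subseq [a, b] (y # w) \<longleftrightarrow> a = y \<and> b \<in> set w \<or> subseq [a, b] w"
    by (simp only: subseq_Cons_Cons_iff subseq_singleton_left)
  then show ?case
    unfolding Cons.IH in_set_conv_nth by (auto simp: Ex_less_Suc2)
qed simp

lemma subseq_triple_iff_nth:
  "subseq [a, b, c] w \<longleftrightarrow>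
     (\<exists>k<length w. \<exists>j<k. \<exists>i<j. w ! i = a \<and> w ! j = b \<and> w ! k = c)"
proof (induction w)
  case (Cons y w)
  have "subseq [a, b, c] (y # w) \<longleftrightarrow> a = y \<and> subseq [b, c] w \<or> subseq [a, b, c] w"
    by (simp only: subseq_Cons_Cons_iff)
  then show ?case
    unfolding Cons.IH subseq_pair_iff_nth by (auto simp: Ex_less_Suc2)
qed simp

lemma subseq_rev_iff: "subseq (rev xs) (rev ys) \<longleftrightarrow> subseq xs ys"
proof -
  have "subseq (rev xs) (rev ys)" if "subseq xs ys" for xs ys :: "'a list"
    using that by induction (auto intro: subseq_rev_drop_many)
  then show ?thesis by (metis rev_rev_ident)
qed

lemma sorted_wrt_subseq_pair: "sorted_wrt R xs \<Longrightarrow> subseq [a, b] xs \<Longrightarrow> R a b"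
  by (induction xs) (auto simp: subseq_singleton_left split: if_splits)

section \<open>Occurrences of the patterns\<close>

lemma ex_length_Suc_iff:
  "(\<exists>xs. length xs = Suc n \<and> P xs) \<longleftrightarrow> (\<exists>x xs. length xs = n \<and> P (x # xs))"
  by (metis length_Suc_conv)

lemma contains_length2_iff:
  "contains w ([p0, p1], U) \<longleftrightarrow>
    (\<exists>i j. i < j \<and> j < length w \<and>
       (w ! i < w ! j \<longleftrightarrow> p0 < p1) \<and> (w ! j < w ! i \<longleftrightarrow> p1 < p0) \<and>
       (0 \<in> U \<longrightarrow> j = Suc i))"
  unfolding contains_def Let_def fst_conv snd_conv
  by (simp add: ex_length_Suc_iff less_Suc_eq all_conj_distrib)
    (rule iffI; elim exE conjE; intro exI conjI; (assumption | linarith))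

lemma contains_length3_iff:
  "contains w ([p0, p1, p2], U) \<longleftrightarrow>
    (\<exists>i j k. i < j \<and> j < k \<and> k < length w \<and>
       (w ! i < w ! j \<longleftrightarrow> p0 < p1) \<and> (w ! j < w ! i \<longleftrightarrow> p1 < p0) \<and>
       (w ! i < w ! k \<longleftrightarrow> p0 < p2) \<and> (w ! k < w ! i \<longleftrightarrow> p2 < p0) \<and>
       (w ! j < w ! k \<longleftrightarrow> p1 < p2) \<and> (w ! k < w ! j \<longleftrightarrow> p2 < p1) \<and>
       (0 \<in> U \<longrightarrow> j = Suc i) \<and> (1 \<in> U \<longrightarrow> k = Suc j))"
  unfolding contains_def Let_def fst_conv snd_conv
  by (simp add: ex_length_Suc_iff less_Suc_eq all_conj_distrib ball_conj_distrib)
    (rule iffI; elim exE conjE; intro exI conjI; (assumption | linarith))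

definition pat_231 :: vpattern where "pat_231 = ([2,3,1], {})"

lemma contains_21_iff: "contains w pat_21 \<longleftrightarrow> (\<exists>a b. b < a \<and> subseq [a, b] w)"
  unfolding pat_21_def contains_length2_iff subseq_pair_iff_nth by (auto dest: less_not_sym)

lemma contains_231_iff: "contains w pat_231 \<longleftrightarrow> (\<exists>a b c. a < b \<and> b < c \<and> subseq [b, c, a] w)"
proof -
  have "contains w pat_231 \<longleftrightarrow> (\<exists>k<length w. \<exists>j<k. \<exists>i<j. w ! k < w ! i \<and> w ! i < w ! j)"
    unfolding pat_231_def contains_length3_iff
    by (auto simp: not_less) (meson less_imp_le order.strict_trans)
  then show ?thesis
    unfolding subseq_triple_iff_nth by fastforce
qed

lemma contains_132_iff: "contains w pat_132 \<longleftrightarrow> (\<exists>a b c. a < b \<and> b < c \<and> subseq [a, c, b] w)"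
proof -
  have "contains w pat_132 \<longleftrightarrow> (\<exists>k<length w. \<exists>j<k. \<exists>i<j. w ! i < w ! k \<and> w ! k < w ! j)"
    unfolding pat_132_def contains_length3_iff
    by (auto simp: not_less) (meson less_imp_le order.strict_trans)
  then show ?thesis
    unfolding subseq_triple_iff_nth by fastforce
qed

lemma contains_rev_231_iff: "contains (rev w) pat_231 \<longleftrightarrow> contains w pat_132"
proof -
  have "subseq [b, c, a] (rev w) \<longleftrightarrow> subseq [a, c, b] w" for a b c
    using subseq_rev_iff[of "[a, c, b]" w] by simp
  then show ?thesis
    unfolding contains_231_iff contains_132_iff by simp
qed

definition pat_1_u23 :: vpattern where "pat_1_u23 = ([1,2,3], {1})"

lemma contains_u32_1_iff:
  "contains w pat_u32_1 \<longleftrightarrow> (\<exists>u y z v. w = u @ y # z # v \<and> z < y \<and> (\<exists>c\<in>set v. c < z))"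
proof
  assume "contains w pat_u32_1"
  then obtain j l where jl: "Suc j < l" "l < length w" "w ! l < w ! Suc j" "w ! Suc j < w ! j"
    unfolding pat_u32_1_def contains_length3_iff by auto
  then have "w = take j w @ w ! j # w ! Suc j # drop (Suc (Suc j)) w"
    by (simp add: Cons_nth_drop_Suc)
  moreover have "w ! l \<in> set (drop (Suc (Suc j)) w)"
  proof -
    obtain k where "l = Suc (Suc j) + k" using jl(1) by (auto dest: less_imp_Suc_add)
    then show ?thesis using jl(2) nth_mem[of k "drop (Suc (Suc j)) w"] by simp
  qed
  ultimately show "\<exists>u y z v. w = u @ y # z # v \<and> z < y \<and> (\<exists>c\<in>set v. c < z)"
    using jl by blast
next
  assume "\<exists>u y z v. w = u @ y # z # v \<and> z < y \<and> (\<exists>c\<in>set v. c < z)"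
  then obtain u y z v k where "w = u @ y # z # v" "z < y" "k < length v" "v ! k < z"
    by (auto simp: in_set_conv_nth)
  then show "contains w pat_u32_1"
    unfolding pat_u32_1_def contains_length3_iff
    by (intro exI[of _ "length u"] exI[of _ "Suc (length u)"] exI[of _ "Suc (Suc (length u)) + k"])
      (auto simp: nth_append)
qed

lemma contains_1_u23_iff:
  "contains w pat_1_u23 \<longleftrightarrow> (\<exists>u y z v. w = u @ y # z # v \<and> y < z \<and> (\<exists>c\<in>set u. c < y))"
proof
  assume "contains w pat_1_u23"
  then obtain i j where ij: "i < j" "Suc j < length w" "w ! i < w ! j" "w ! j < w ! Suc j"
    unfolding pat_1_u23_def contains_length3_iff by auto
  then have "w = take j w @ w ! j # w ! Suc j # drop (Suc (Suc j)) w"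
    by (simp add: Cons_nth_drop_Suc)
  moreover have "w ! i \<in> set (take j w)"
    using ij nth_mem[of i "take j w"] by simp
  ultimately show "\<exists>u y z v. w = u @ y # z # v \<and> y < z \<and> (\<exists>c\<in>set u. c < y)"
    using ij by blast
next
  assume "\<exists>u y z v. w = u @ y # z # v \<and> y < z \<and> (\<exists>c\<in>set u. c < y)"
  then obtain u y z v i where "w = u @ y # z # v" "y < z" "i < length u" "u ! i < y"
    by (auto simp: in_set_conv_nth)
  then show "contains w pat_1_u23"
    unfolding pat_1_u23_def contains_length3_iff
    by (intro exI[of _ i] exI[of _ "length u"] exI[of _ "Suc (length u)"]) (auto simp: nth_append)
qed

lemma contains_u123_iff:
  "contains w pat_u123 \<longleftrightarrow> (\<exists>u a b c v. w = u @ a # b # c # v \<and> a < b \<and> b < c)"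
proof
  assume "contains w pat_u123"
  then obtain i where i: "Suc (Suc i) < length w" "w ! i < w ! Suc i" "w ! Suc i < w ! Suc (Suc i)"
    unfolding pat_u123_def contains_length3_iff by auto
  then have "w = take i w @ w ! i # w ! Suc i # w ! Suc (Suc i) # drop (Suc (Suc (Suc i))) w"
    by (simp add: Cons_nth_drop_Suc)
  then show "\<exists>u a b c v. w = u @ a # b # c # v \<and> a < b \<and> b < c"
    using i by blast
next
  assume "\<exists>u a b c v. w = u @ a # b # c # v \<and> a < b \<and> b < c"
  then obtain u a b c v where "w = u @ a # b # c # v" "a < b" "b < c" by blast
  then show "contains w pat_u123"
    unfolding pat_u123_def contains_length3_iff
    by (intro exI[of _ "length u"] exI[of _ "Suc (length u)"] exI[of _ "Suc (Suc (length u))"])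
      (auto simp: nth_append)
qed

lemma contains_1_u23_if_u123: "contains w pat_u123 \<Longrightarrow> contains w pat_1_u23"
proof -
  assume "contains w pat_u123"
  then obtain u a b c v where "w = (u @ [a]) @ b # c # v" "a < b" "b < c"
    unfolding contains_u123_iff by auto
  moreover have "a \<in> set (u @ [a])" by simp
  ultimately show "contains w pat_1_u23"
    unfolding contains_1_u23_iff by blast
qed

lemma contains_u123_or_132_if_1_u23:
  assumes "distinct w" "contains w pat_1_u23"
  shows "contains w pat_u123 \<or> contains w pat_132"
proof -
  obtain u y z v c where w: "w = u @ y # z # v" and "y < z" "c \<in> set u" "c < y"
    using assms(2) unfolding contains_1_u23_iff by blast
  then obtain u' p where u: "u = u' @ [p]"
    by (cases u rule: rev_exhaust) auto
  show ?thesis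
  proof (cases "p < y")
    case True
    have "w = u' @ p # y # z # v"
      unfolding w u by simp
    with True \<open>y < z\<close> have "contains w pat_u123"
      unfolding contains_u123_iff by blast
    then show ?thesis ..
  next
    case False
    with assms(1) have "y < p"
      unfolding w u by (auto simp: nat_neq_iff)
    with \<open>c \<in> set u\<close> \<open>c < y\<close> have "c \<in> set u'"
      unfolding u by auto
    then have "subseq ([c] @ [p, y]) (u' @ [p] @ y # z # v)"
      by (intro list_emb_append_mono) (auto simp: subseq_singleton_left)
    with \<open>c < y\<close> \<open>y < p\<close> have "contains w pat_132"
      unfolding contains_132_iff w u by auto
    then show ?thesis ..
  qed
qed

lemma avoids_231_Cons:
  "avoids (x # xs) pat_231 \<longleftrightarrow>
     avoids xs pat_231 \<and> \<not> (\<exists>a c. a < x \<and> x < c \<and> subseq [c, a] xs)"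
proof -
  have "contains (x # xs) pat_231 \<longleftrightarrow>
      contains xs pat_231 \<or> (\<exists>a c. a < x \<and> x < c \<and> subseq [c, a] xs)"
    unfolding contains_231_iff subseq_Cons_Cons_iff by blast
  then show ?thesis
    unfolding avoids_def by blast
qed

lemma avoids_21_Cons:
  assumes "sorted_wrt (<) st"
  shows "avoids (x # st) pat_21 \<longleftrightarrow> (\<forall>y\<in>set st. x \<le> y)"
proof -
  have "contains (x # st) pat_21 \<longleftrightarrow> (\<exists>y\<in>set st. y < x)"
    unfolding contains_21_iff subseq_Cons_Cons_iff subseq_singleton_left
    by (auto dest: sorted_wrt_subseq_pair[OF assms])
  then show ?thesis
    unfolding avoids_def by (simp add: not_less)
qed

lemma sc_aux_pop:
  "\<not> avoids (x # y # ys) \<sigma> \<Longrightarrow>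
    sc_aux \<sigma> (x # xs) (y # ys) out = sc_aux \<sigma> (x # xs) ys (out @ [y])"
  by simp

lemma sc_aux_output: "\<exists>r. sc_aux \<sigma> xs st out = out @ r \<and> mset r = mset xs + mset st"
proof (induction \<sigma> xs st out rule: sc_aux.induct)
  case (2 \<sigma> x xs st out)
  show ?case
  proof (cases "avoids (x # st) \<sigma>")
    case True
    with "2.IH"(1) show ?thesis by auto
  next
    case False
    show ?thesis
    proof (cases st)
      case Nil
      with False "2.IH"(2) show ?thesis by auto
    next
      case (Cons y ys)
      with False "2.IH"(3) obtain r where
        "sc_aux \<sigma> (x # xs) ys (out @ [y]) = (out @ [y]) @ r" "mset r = mset (x # xs) + mset ys"
        by blast
      with False Cons show ?thesis
        by (intro exI[of _ "y # r"]) auto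
    qed
  qed
qed simp

lemma mset_SC: "mset (SC \<sigma> \<tau>) = mset \<tau>"
  using sc_aux_output[of \<sigma> \<tau> "[]" "[]"] unfolding SC_def by auto

lemma SC_in_permutations_of_set: "\<tau> \<in> permutations_of_set A \<Longrightarrow> SC \<sigma> \<tau> \<in> permutations_of_set A"
  unfolding permutations_of_set_def
  using mset_eq_setD[OF mset_SC] mset_eq_imp_distinct_iff[OF mset_SC] by auto

lemma sc_aux_stack_order:
  "st = u @ m # v \<Longrightarrow> x \<in> set u \<Longrightarrow> subseq [x, m] (sc_aux \<sigma> xs st out)"
proof (induction \<sigma> xs st out arbitrary: u rule: sc_aux.induct)
  case (1 \<sigma> st out)
  then have "subseq ([x] @ [m]) (u @ m # v)"
    by (intro list_emb_append_mono) (auto simp: subseq_singleton_left)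
  then show ?case
    using "1.prems"(1) subseq_drop_many[of "[x, m]" _ out] by simp
next
  case (2 \<sigma> x' xs st out)
  show ?case
  proof (cases "avoids (x' # st) \<sigma>")
    case True
    with "2.IH"(1)[of "x' # u"] "2.prems" show ?thesis by simp
  next
    case False
    from "2.prems"(2) obtain y u' where u: "u = y # u'"
      by (cases u) auto
    with "2.prems"(1) have st: "st = y # u' @ m # v"
      by simp
    have pop: "sc_aux \<sigma> (x' # xs) st out = sc_aux \<sigma> (x' # xs) (u' @ m # v) (out @ [y])"
      using False unfolding st by (rule sc_aux_pop)
    show ?thesis
    proof (cases "x = y")
      case True
      obtain r where r: "sc_aux \<sigma> (x' # xs) (u' @ m # v) (out @ [y]) = (out @ [y]) @ r"
        "mset r = mset (x' # xs) + mset (u' @ m # v)"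
        using sc_aux_output by blast
      have "m \<in> set r"
        using arg_cong[OF r(2), of set_mset] by simp
      then have "subseq ([x] @ [m]) ((out @ [y]) @ r)"
        using True by (intro list_emb_append_mono) (auto simp: subseq_singleton_left)
      then show ?thesis
        unfolding pop r(1) by simp
    next
      case False
      with "2.prems"(2) u have "x \<in> set u'"
        by simp
      with "2.IH"(3)[OF \<open>\<not> avoids (x' # st) \<sigma>\<close> st] show ?thesis
        unfolding pop by simp
    qed
  qed
qed

section \<open>West's stack-sorting map\<close>

text \<open>Knuth's invariant. Its last clause says that no stack entry b is followed in the input
  by some c > b and later by some a < b: the entry c would pop b before a is output.\<close>
definition west_inv :: "nat list \<Rightarrow> nat list \<Rightarrow> nat list \<Rightarrow> bool" where
  "west_inv out st xs \<longleftrightarrow>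
     sorted out \<and> (\<forall>q\<in>set out. \<forall>z\<in>set st \<union> set xs. q < z) \<and> avoids xs pat_231 \<and>
     \<not> (\<exists>b\<in>set st. \<exists>a c. a < b \<and> b < c \<and> subseq [c, a] xs)"

lemma west_inv_push:
  assumes "\<forall>y\<in>set st. x < y"
  shows "west_inv out st (x # xs) \<longleftrightarrow> west_inv out (x # st) xs"
proof -
  have "(\<exists>b\<in>set st. \<exists>a c. a < b \<and> b < c \<and> subseq [c, a] (x # xs)) \<longleftrightarrow>
        (\<exists>b\<in>set st. \<exists>a c. a < b \<and> b < c \<and> subseq [c, a] xs)"
    using assms unfolding subseq_Cons_Cons_iff by (auto dest: less_asym)
  then show ?thesis
    unfolding west_inv_def avoids_231_Cons by auto
qed

lemma west_inv_pop:
  assumes "sorted_wrt (<) (y # ys)" "y < x" "distinct (out @ y # ys @ x # xs)"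
  shows "west_inv out (y # ys) (x # xs) \<longleftrightarrow> west_inv (out @ [y]) ys (x # xs)"
proof
  assume inv: "west_inv out (y # ys) (x # xs)"
  have "y < z" if "z \<in> set xs" for z
  proof (rule ccontr)
    assume "\<not> y < z"
    with that assms(3) have "z < y" by auto
    moreover have "subseq [x, z] (x # xs)"
      using that by (simp add: subseq_singleton_left)
    ultimately show False
      using inv assms(2) list.set_intros(1)[of y ys] unfolding west_inv_def by blast
  qed
  with inv assms(1,2) show "west_inv (out @ [y]) ys (x # xs)"
    unfolding west_inv_def by (auto simp: sorted_append less_imp_le)
next
  assume inv: "west_inv (out @ [y]) ys (x # xs)"
  then have y_min: "y < z" if "z \<in> set (x # xs)" for z
    using that unfolding west_inv_def by auto
  have "\<not> (a < y \<and> subseq [c, a] (x # xs))" for a c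
    using y_min[of a] by (meson less_asym subseq_Cons' subseq_singleton_left)
  moreover have "q < y" if "q \<in> set out" for q
    using inv that assms(3) unfolding west_inv_def by (auto simp: sorted_append order.order_iff_strict)
  ultimately show "west_inv out (y # ys) (x # xs)"
    using inv y_min unfolding west_inv_def by (auto simp: sorted_append)
qed

lemma sorted_sc_aux_21_iff:
  "sorted_wrt (<) st \<Longrightarrow> distinct (out @ st @ xs) \<Longrightarrow>
    sorted (sc_aux pat_21 xs st out) \<longleftrightarrow> west_inv out st xs"
proof (induction pat_21 xs st out rule: sc_aux.induct)
  case (1 st out)
  then show ?case
    by (auto simp: west_inv_def avoids_def contains_231_iff sorted_append
        strict_sorted_imp_sorted order.order_iff_strict)
next
  case (2 x xs st out)
  show ?case
  proof (cases "avoids (x # st) pat_21")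
    case True
    with "2.prems" have "\<forall>y\<in>set st. x < y"
      by (auto simp: avoids_21_Cons order.order_iff_strict)
    with True "2.hyps"(1) "2.prems" show ?thesis
      by (simp add: west_inv_push)
  next
    case False
    with "2.prems"(1) have "\<exists>z\<in>set st. z < x"
      by (auto simp: avoids_21_Cons not_le)
    with "2.prems"(1) obtain y ys where st: "st = y # ys" and "y < x"
      by (cases st) auto
    with False "2.hyps"(3) "2.prems" show ?thesis
      by (simp add: west_inv_pop)
  qed
qed

theorem sorted_west_s_iff: "distinct \<pi> \<Longrightarrow> sorted (west_s \<pi>) \<longleftrightarrow> avoids \<pi> pat_231"
  using sorted_sc_aux_21_iff[of "[]" "[]" \<pi>] by (simp add: west_s_def SC_def west_inv_def)

section \<open>The map $\mathrm{SC}_{\underline{32}1}$\<close>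

lemma avoids_u32_1_Cons:
  "avoids (x # st) pat_u32_1 \<longleftrightarrow>
     avoids st pat_u32_1 \<and> \<not> (\<exists>y ys. st = y # ys \<and> y < x \<and> (\<exists>c\<in>set ys. c < y))"
proof -
  have "contains (x # st) pat_u32_1 \<longleftrightarrow>
      contains st pat_u32_1 \<or> (\<exists>y ys. st = y # ys \<and> y < x \<and> (\<exists>c\<in>set ys. c < y))"
    unfolding contains_u32_1_iff Cons_eq_append_conv by blast
  then show ?thesis
    unfolding avoids_def by blast
qed

lemma sc_u32_1_next_before_stack_min:
  assumes "avoids st pat_u32_1" "m \<in> set st" "\<forall>z\<in>set st. m \<le> z"
  shows "subseq [x, m] (sc_aux pat_u32_1 (x # xs) st out)"
  using assms
proof (induction st arbitrary: out)
  case (Cons y ys)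
  show ?case
  proof (cases "avoids (x # y # ys) pat_u32_1")
    case True
    from \<open>m \<in> set (y # ys)\<close> obtain u v where "y # ys = u @ m # v"
      by (meson split_list)
    then have "subseq [x, m] (sc_aux pat_u32_1 xs (x # y # ys) out)"
      by (intro sc_aux_stack_order[of _ "x # u" m v]) simp_all
    with True show ?thesis by simp
  next
    case False
    with Cons.prems(1) obtain c where "y < x" "c \<in> set ys" "c < y"
      by (auto simp: avoids_u32_1_Cons)
    with Cons.prems(3) have "m \<noteq> y" by auto
    with Cons.prems have "subseq [x, m] (sc_aux pat_u32_1 (x # xs) ys (out @ [y]))"
      by (intro Cons.IH) (auto simp: avoids_u32_1_Cons)
    with False show ?thesis by simp
  qed
qed simp

lemma sc_u32_1_pushes_all:
  "\<not> contains w pat_1_u23 \<Longrightarrow>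
    sc_aux pat_u32_1 (w @ xs) [] out = sc_aux pat_u32_1 xs (rev w) out \<and> avoids (rev w) pat_u32_1"
proof (induction w arbitrary: xs rule: rev_induct)
  case Nil
  show ?case by (simp add: avoids_def contains_u32_1_iff)
next
  case (snoc x w)
  have "\<not> contains w pat_1_u23"
    using snoc.prems unfolding contains_1_u23_iff by force
  with snoc.IH have IH: "sc_aux pat_u32_1 (w @ x # xs) [] out = sc_aux pat_u32_1 (x # xs) (rev w) out"
    "avoids (rev w) pat_u32_1"
    by blast+
  have "\<not> (rev w = y # ys \<and> y < x \<and> c \<in> set ys \<and> c < y)" for y ys c
  proof
    assume "rev w = y # ys \<and> y < x \<and> c \<in> set ys \<and> c < y"
    then have "w @ [x] = rev ys @ y # x # [] \<and> y < x \<and> c \<in> set (rev ys) \<and> c < y"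
      by (simp add: rev_eq_Cons_iff)
    with snoc.prems show False
      unfolding contains_1_u23_iff by blast
  qed
  with IH(2) have "avoids (x # rev w) pat_u32_1"
    by (auto simp: avoids_u32_1_Cons)
  with IH show ?case by simp
qed

lemma SC_u32_1_eq_rev: "\<not> contains \<tau> pat_1_u23 \<Longrightarrow> SC pat_u32_1 \<tau> = rev \<tau>"
  using sc_u32_1_pushes_all[of \<tau> "[]" "[]"] unfolding SC_def by simp

lemma contains_1_u23_snoc:
  assumes "contains (w @ [x]) pat_1_u23" "\<not> contains w pat_1_u23"
  obtains p y c where "w = p @ [y]" "y < x" "c \<in> set p" "c < y"
proof -
  obtain u y z v c where split: "w @ [x] = u @ y # z # v" "y < z" "c \<in> set u" "c < y"
    using assms(1) unfolding contains_1_u23_iff by blast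
  have "v = []"
  proof (rule ccontr)
    assume "v \<noteq> []"
    then obtain v' a where "v = v' @ [a]"
      by (cases v rule: rev_exhaust) auto
    with split(1) have "w = u @ y # z # v'"
      by (metis append1_eq_conv append_Cons append_assoc)
    with split(2-4) have "contains w pat_1_u23"
      unfolding contains_1_u23_iff by blast
    with assms(2) show False ..
  qed
  with split that show ?thesis by auto
qed

lemma contains_231_sc_u32_1_blocked:
  assumes "avoids (y # st) pat_u32_1" "y < x" "c \<in> set st" "c < y"
  shows "contains (sc_aux pat_u32_1 (x # xs) (y # st) []) pat_231"
proof -
  have "\<not> avoids (x # y # st) pat_u32_1"
    using assms(2-4) by (auto simp: avoids_u32_1_Cons)
  then have pop: "sc_aux pat_u32_1 (x # xs) (y # st) [] = sc_aux pat_u32_1 (x # xs) st [y]"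
    by (metis sc_aux_pop append_Nil)
  define m where "m = Min (set st)"
  have "m < y"
    using assms(3,4) unfolding m_def by (meson Min_le finite_set le_less_trans)
  moreover have "m \<in> set st" "\<forall>z\<in>set st. m \<le> z"
    using assms(3) unfolding m_def by (auto intro: Min_in)
  moreover have "avoids st pat_u32_1"
    using assms(1) by (simp add: avoids_u32_1_Cons)
  ultimately have "subseq [x, m] (sc_aux pat_u32_1 (x # xs) st [y])"
    by (intro sc_u32_1_next_before_stack_min)
  moreover obtain r where "sc_aux pat_u32_1 (x # xs) st [y] = y # r"
    using sc_aux_output[of pat_u32_1 "x # xs" st "[y]"] by auto
  ultimately have "subseq [y, x, m] (sc_aux pat_u32_1 (x # xs) st [y])"
    using assms(2) by (simp add: subseq_Cons_Cons_iff)
  with \<open>m < y\<close> assms(2) show ?thesis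
    unfolding contains_231_iff pop by blast
qed

lemma contains_231_sc_u32_1:
  "contains w pat_1_u23 \<Longrightarrow> contains (sc_aux pat_u32_1 (w @ xs) [] []) pat_231"
proof (induction w arbitrary: xs rule: rev_induct)
  case Nil
  then show ?case by (simp add: contains_1_u23_iff)
next
  case (snoc x w)
  show ?case
  proof (cases "contains w pat_1_u23")
    case True
    with snoc.IH[of "x # xs"] show ?thesis by simp
  next
    case False
    with snoc.prems obtain p y c where w: "w = p @ [y]" "y < x" "c \<in> set p" "c < y"
      by (rule contains_1_u23_snoc)
    from sc_u32_1_pushes_all[OF False, of "x # xs" "[]"] w(1)
    have "sc_aux pat_u32_1 ((w @ [x]) @ xs) [] [] = sc_aux pat_u32_1 (x # xs) (y # rev p) []"
      and "avoids (y # rev p) pat_u32_1"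
      by simp_all
    with w(2-4) show ?thesis
      using contains_231_sc_u32_1_blocked[of y "rev p" x c xs] by simp
  qed
qed

theorem avoids_231_SC_u32_1_iff:
  assumes "distinct \<tau>"
  shows "avoids (SC pat_u32_1 \<tau>) pat_231 \<longleftrightarrow> avoids \<tau> pat_u123 \<and> avoids \<tau> pat_132"
proof (cases "contains \<tau> pat_1_u23")
  case True
  then have "contains (SC pat_u32_1 \<tau>) pat_231"
    using contains_231_sc_u32_1[of \<tau> "[]"] unfolding SC_def by simp
  with contains_u123_or_132_if_1_u23[OF assms True] show ?thesis
    unfolding avoids_def by blast
next
  case False
  then show ?thesis
    using contains_1_u23_if_u123 unfolding avoids_def SC_u32_1_eq_rev[OF False] contains_rev_231_iff
    by blast
qed

lemma sorted_iff_eq_upt: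
  "xs \<in> permutations_of_set {1..n} \<Longrightarrow> sorted xs \<longleftrightarrow> xs = [1..<Suc n]"
  using sorted_distinct_set_unique[of xs "[1..<Suc n]"]
  by (auto simp: permutations_of_set_def atLeastLessThanSuc_atLeastAtMost simp del: upt_Suc)

theorem mainTheorem5:
  fixes n :: nat
  assumes "n \<ge> 1"
  shows "Sort_n n pat_u32_1 = Av_n n [pat_u123, pat_132]"
proof -
  have "west_s (SC pat_u32_1 \<tau>) = [1..<Suc n] \<longleftrightarrow> avoids \<tau> pat_u123 \<and> avoids \<tau> pat_132"
    if \<tau>: "\<tau> \<in> permutations_of_set {1..n}" for \<tau>
  proof -
    have SC_perm: "SC pat_u32_1 \<tau> \<in> permutations_of_set {1..n}"
      using \<tau> by (rule SC_in_permutations_of_set)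
    then have "west_s (SC pat_u32_1 \<tau>) \<in> permutations_of_set {1..n}"
      unfolding west_s_def by (rule SC_in_permutations_of_set)
    then have "west_s (SC pat_u32_1 \<tau>) = [1..<Suc n] \<longleftrightarrow> sorted (west_s (SC pat_u32_1 \<tau>))"
      by (rule sorted_iff_eq_upt[symmetric])
    also have "\<dots> \<longleftrightarrow> avoids (SC pat_u32_1 \<tau>) pat_231"
      using SC_perm by (intro sorted_west_s_iff) (simp add: permutations_of_set_def)
    also have "\<dots> \<longleftrightarrow> avoids \<tau> pat_u123 \<and> avoids \<tau> pat_132"
      using \<tau> by (intro avoids_231_SC_u32_1_iff) (simp add: permutations_of_set_def)
    finally show ?thesis .
  qed
  then show ?thesis
    unfolding Sort_n_def Av_n_def by auto
qed

end
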